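(* Let $\overline{SB}$ be the output of Algorithm 1 on $\widetilde G$ and $M$, and let $SB^\ast$ be a minimum satellite bridge for $M$. Then $\overline{SB}$ is a satellite bridge for $M$ and $|N(\overline{SB})|\le \big(3\rho H(\Delta+1)+\rho\big)\,|N(SB^\ast)|$, where $\Delta$ is the maximum degree of $G$, $H(n)=\sum_{k=1}^n 1/k$ is the harmonic number, and $\rho$ is the approximation ratio of the Steiner tree procedure used in Algorithm 1.
   Context: Let $G=(V,E)$ be a finite, simple, undirected, connected graph with $|V|\ge 2$ and maximum degree $\Delta$. Fix a positive integer $K$ and, for every $u\in V$, a nonempty set $\Gamma(u)\subseteq\{1,\dots,K\}$. Let $nb_G(u)$ be the neighbours of $u$ in $G$. For a tree $T$, $N(T)$ and $E(T)$ are its vertex and edge sets. The extended graph $\widetilde G=(\widetilde V,\widetilde E)$ of $G$: (i) initially $\widetilde V=V$, $\widetilde E=\emptyset$; (ii) for each $u\in V$ and each $i\in\bigcup_{v\in nb_G(u)}\Gamma(v)$, add a new vertex $\lambda(u,i)$ (satellite node of $u$; $u$ is its nuclear node); $\Psi(u)$ is the set of satellite nodes of $u$; (iii) for each $u\in V$, join every pair of distinct vertices of $\Psi(u)\cup\{u\}$; (iv) for each edge $\{u,v\}\in E$ (in each orientation $(u,v)$), each $i\in\Gamma(v)$, $j\in\Gamma(u)$, add edges $\{\lambda(u,i),\lambda(v,j)\}$, $\{\lambda(u,i),v\}$, $\{u,\lambda(v,j)\}$. $V_S=\widetilde V\setminus V$ is the set of satellite nodes, $\widetilde G_s$ the subgraph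 of $\widetilde G$ induced by $V_S$, and $nb_{\widetilde G}(x)$ the neighbourhood of $x$ in $\widetilde G$. Given $M\subseteq V$, a satellite bridge is a (nonempty) subtree $SB$ of $\widetilde G$ all of whose vertices are satellite nodes and such that every vertex of $M$ is adjacent in $\widetilde G$ to at least one vertex of $SB$. A minimum satellite bridge is one with the minimum number of vertices. Algorithm 1 (input $\widetilde G$, $M$): set $C=\emptyset$, $UC=M$. While $UC\neq\emptyset$: pick $v\in V_S\setminus C$ maximizing $|nb_{\widetilde G}(v)\cap UC|$ (ties broken arbitrarily), set $C=C\cup\{v\}$ and $UC=UC\setminus nb_{\widetilde G}(v)$. Then compute a tree $ST$ in $\widetilde G_s$ with $C\subseteq N(ST)$ and $|E(ST)|\le\rho\cdot\min\{|E(T')|: T'$ a tree in $\widetilde G_s$ with $C\subseteq N(T')\}$, using a fixed $\rho$-approximation algorithm ($\rho\ge 1$) for the unit-weight Steiner tree problem. Output $\overline{SB}=ST$. *)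

theory Defs
  imports "HOL-Analysis.Analysis"
begin

text \<open>Vertices of the extended graph: nuclear nodes (copies of V) and satellite nodes lambda(u,i).\<close>
datatype 'a xv = Nuc 'a | Sat 'a nat

definition simple_graph :: "'a set \<Rightarrow> ('a \<Rightarrow> 'a \<Rightarrow> bool) \<Rightarrow> bool" where
  "simple_graph V E \<longleftrightarrow> finite V \<and> (\<forall>u v. E u v \<longrightarrow> u \<in> V \<and> v \<in> V \<and> u \<noteq> v \<and> E v u)"

definition connected_graph :: "'a set \<Rightarrow> ('a \<Rightarrow> 'a \<Rightarrow> bool) \<Rightarrow> bool" where
  "connected_graph V E \<longleftrightarrow> (\<forall>u\<in>V. \<forall>v\<in>V. E\<^sup>*\<^sup>* u v)"

definition nbG :: "'a set \<Rightarrow> ('a \<Rightarrow> 'a \<Rightarrow> bool) \<Rightarrow> 'a \<Rightarrow> 'a set" where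
  "nbG V E u = {v \<in> V. E u v}"

definition max_degree :: "'a set \<Rightarrow> ('a \<Rightarrow> 'a \<Rightarrow> bool) \<Rightarrow> nat" where
  "max_degree V E = Max ((\<lambda>u. card (nbG V E u)) ` V)"

definition sat_idx :: "'a set \<Rightarrow> ('a \<Rightarrow> 'a \<Rightarrow> bool) \<Rightarrow> ('a \<Rightarrow> nat set) \<Rightarrow> 'a \<Rightarrow> nat set" where
  "sat_idx V E \<Gamma> u = (\<Union>v\<in>nbG V E u. \<Gamma> v)"

definition Psi :: "'a set \<Rightarrow> ('a \<Rightarrow> 'a \<Rightarrow> bool) \<Rightarrow> ('a \<Rightarrow> nat set) \<Rightarrow> 'a \<Rightarrow> 'a xv set" where
  "Psi V E \<Gamma> u = {Sat u i | i. i \<in> sat_idx V E \<Gamma> u}"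

definition sat_nodes :: "'a set \<Rightarrow> ('a \<Rightarrow> 'a \<Rightarrow> bool) \<Rightarrow> ('a \<Rightarrow> nat set) \<Rightarrow> 'a xv set" where
  "sat_nodes V E \<Gamma> = (\<Union>u\<in>V. Psi V E \<Gamma> u)"

text \<open>Adjacency of the extended graph, steps (iii) and (iv).\<close>
definition ext_edge :: "'a set \<Rightarrow> ('a \<Rightarrow> 'a \<Rightarrow> bool) \<Rightarrow> ('a \<Rightarrow> nat set) \<Rightarrow> 'a xv \<Rightarrow> 'a xv \<Rightarrow> bool" where
  "ext_edge V E \<Gamma> x y \<longleftrightarrow> x \<noteq> y \<and>
     ((\<exists>u\<in>V. x \<in> insert (Nuc u) (Psi V E \<Gamma> u) \<and> y \<in> insert (Nuc u) (Psi V E \<Gamma> u)) \<or>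
      (\<exists>u v i j. E u v \<and> i \<in> \<Gamma> v \<and> j \<in> \<Gamma> u \<and>
         ({x, y} = {Sat u i, Sat v j} \<or> {x, y} = {Sat u i, Nuc v} \<or> {x, y} = {Nuc u, Sat v j})))"

definition nbX :: "'a set \<Rightarrow> ('a \<Rightarrow> 'a \<Rightarrow> bool) \<Rightarrow> ('a \<Rightarrow> nat set) \<Rightarrow> 'a xv \<Rightarrow> 'a xv set" where
  "nbX V E \<Gamma> x = {y. ext_edge V E \<Gamma> x y}"

definition is_tree :: "('v \<Rightarrow> 'v \<Rightarrow> bool) \<Rightarrow> 'v set \<Rightarrow> 'v set set \<Rightarrow> bool" where
  "is_tree Adj N F \<longleftrightarrow> finite N \<and> N \<noteq> {} \<and>
     F \<subseteq> {{x, y} | x y. x \<in> N \<and> y \<in> N \<and> Adj x y} \<and>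
     (\<forall>x\<in>N. \<forall>y\<in>N. (\<lambda>a b. {a, b} \<in> F)\<^sup>*\<^sup>* x y) \<and>
     card F = card N - 1"

definition sat_tree :: "'a set \<Rightarrow> ('a \<Rightarrow> 'a \<Rightarrow> bool) \<Rightarrow> ('a \<Rightarrow> nat set) \<Rightarrow> 'a xv set \<Rightarrow> 'a xv set set \<Rightarrow> bool" where
  "sat_tree V E \<Gamma> N F \<longleftrightarrow> N \<subseteq> sat_nodes V E \<Gamma> \<and>
     is_tree (\<lambda>x y. ext_edge V E \<Gamma> x y \<and> x \<in> sat_nodes V E \<Gamma> \<and> y \<in> sat_nodes V E \<Gamma>) N F"

definition satellite_bridge :: "'a set \<Rightarrow> ('a \<Rightarrow> 'a \<Rightarrow> bool) \<Rightarrow> ('a \<Rightarrow> nat set) \<Rightarrow> 'a set \<Rightarrow> 'a xv set \<Rightarrow> 'a xv set set \<Rightarrow> bool" where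
  "satellite_bridge V E \<Gamma> M N F \<longleftrightarrow>
     N \<subseteq> sat_nodes V E \<Gamma> \<and> is_tree (ext_edge V E \<Gamma>) N F \<and>
     (\<forall>m\<in>M. \<exists>x\<in>N. ext_edge V E \<Gamma> (Nuc m) x)"

definition min_satellite_bridge :: "'a set \<Rightarrow> ('a \<Rightarrow> 'a \<Rightarrow> bool) \<Rightarrow> ('a \<Rightarrow> nat set) \<Rightarrow> 'a set \<Rightarrow> 'a xv set \<Rightarrow> 'a xv set set \<Rightarrow> bool" where
  "min_satellite_bridge V E \<Gamma> M N F \<longleftrightarrow> satellite_bridge V E \<Gamma> M N F \<and>
     (\<forall>N' F'. satellite_bridge V E \<Gamma> M N' F' \<longrightarrow> card N \<le> card N')"

definition uncovered :: "'a set \<Rightarrow> ('a \<Rightarrow> 'a \<Rightarrow> bool) \<Rightarrow> ('a \<Rightarrow> nat set) \<Rightarrow> 'a set \<Rightarrow> 'a xv list \<Rightarrow> nat \<Rightarrow> 'a xv set" where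
  "uncovered V E \<Gamma> M cs k = Nuc ` M - (\<Union>c\<in>set (take k cs). nbX V E \<Gamma> c)"

text \<open>cs is the sequence of nodes chosen by a (terminating) run of the greedy loop of
  Algorithm 1, with arbitrary tie-breaking; C = set cs.\<close>
definition greedy_run :: "'a set \<Rightarrow> ('a \<Rightarrow> 'a \<Rightarrow> bool) \<Rightarrow> ('a \<Rightarrow> nat set) \<Rightarrow> 'a set \<Rightarrow> 'a xv list \<Rightarrow> bool" where
  "greedy_run V E \<Gamma> M cs \<longleftrightarrow>
     (\<forall>k < length cs.
        uncovered V E \<Gamma> M cs k \<noteq> {} \<and>
        cs ! k \<in> sat_nodes V E \<Gamma> - set (take k cs) \<and>
        (\<forall>v \<in> sat_nodes V E \<Gamma> - set (take k cs).
           card (nbX V E \<Gamma> v \<inter> uncovered V E \<Gamma> M cs k)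
             \<le> card (nbX V E \<Gamma> (cs ! k) \<inter> uncovered V E \<Gamma> M cs k))) \<and>
     uncovered V E \<Gamma> M cs (length cs) = {}"

definition steiner_approx :: "'a set \<Rightarrow> ('a \<Rightarrow> 'a \<Rightarrow> bool) \<Rightarrow> ('a \<Rightarrow> nat set) \<Rightarrow> real \<Rightarrow> 'a xv set \<Rightarrow> 'a xv set \<Rightarrow> 'a xv set set \<Rightarrow> bool" where
  "steiner_approx V E \<Gamma> \<rho> C N F \<longleftrightarrow> sat_tree V E \<Gamma> N F \<and> C \<subseteq> N \<and>
     (\<forall>N' F'. sat_tree V E \<Gamma> N' F' \<and> C \<subseteq> N' \<longrightarrow> real (card F) \<le> \<rho> * real (card F'))"

end

theory Submission
  imports Defs
begin

(* Write C for the set of satellite nodes chosen by the greedy loop and SB* = (Nopt, Fopt)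
   for a minimum satellite bridge.
   (1) The greedy loop is the classical greedy set-cover heuristic for covering the nuclear
       nodes of M by neighbourhoods of satellite nodes; each such neighbourhood meets at most
       Delta + 1 nuclear nodes, and Nopt is itself a cover, so |C| <= H(Delta+1) |Nopt|.  Two
       satellite nodes adjacent to the same nuclear node m are joined through the clique of
       satellites of m by a satellite walk with at most two inner nodes.  Attaching these
       walks to SB* yields a satellite tree on at most |Nopt| + 3|C| nodes containing C.
   (3) The Steiner step is rho-optimal, so |N(SB)| <= rho |N(that tree)|, and (1), (2)
       give the bound; that SB is a satellite bridge follows since C covers M. *)


section \<open>A harmonic-number estimate\<close>

text \<open>Each of the a - b terms of H(a) - H(b) is at least 1/a; this is the per-element
  charge estimate in the greedy set-cover analysis.\<close>
lemma harm_diff_lower: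
  assumes "b \<le> a"
  shows "real (a - b) / real a \<le> harm a - (harm b :: real)"
  using assms
proof (induction a rule: dec_induct)
  case base
  then show ?case by simp
next
  case (step n)
  have "real (n - b) / real (Suc n) \<le> real (n - b) / real n"
    using step.hyps(1) by (cases "n = 0") (auto intro: divide_left_mono)
  also have "\<dots> \<le> harm n - harm b"
    by (rule step.IH)
  finally have "real (n - b) / real (Suc n) + inverse (real (Suc n)) \<le> harm (Suc n) - harm b"
    by (simp add: harm_Suc)
  moreover have "real (Suc n - b) / real (Suc n) = real (n - b) / real (Suc n) + inverse (real (Suc n))"
    using step.hyps(1) by (simp add: Suc_diff_le add_divide_distrib inverse_eq_divide)
  ultimately show ?case by simp
qed


section \<open>The greedy set-cover heuristic\<close>

definition uncov :: "'c set \<Rightarrow> ('b \<Rightarrow> 'c set) \<Rightarrow> 'b list \<Rightarrow> nat \<Rightarrow> 'c set" where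
  "uncov U S cs k = U - (\<Union>c\<in>set (take k cs). S c)"

definition greedy_cover :: "'c set \<Rightarrow> ('b \<Rightarrow> 'c set) \<Rightarrow> 'b set \<Rightarrow> 'b list \<Rightarrow> bool" where
  "greedy_cover U S C cs \<longleftrightarrow>
     (\<forall>k < length cs.
        uncov U S cs k \<noteq> {} \<and> cs ! k \<in> C - set (take k cs) \<and>
        (\<forall>v \<in> C - set (take k cs).
           card (S v \<inter> uncov U S cs k) \<le> card (S (cs ! k) \<inter> uncov U S cs k))) \<and>
     uncov U S cs (length cs) = {}"

lemma greedy_run_iff_greedy_cover:
  "greedy_run V E \<Gamma> M cs \<longleftrightarrow> greedy_cover (Nuc ` M) (nbX V E \<Gamma>) (sat_nodes V E \<Gamma>) cs"
  unfolding greedy_run_def greedy_cover_def uncovered_def uncov_def ..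

lemma greedy_cover_covers:
  "greedy_cover U S C cs \<Longrightarrow> U \<subseteq> (\<Union>c\<in>set cs. S c)"
  unfolding greedy_cover_def uncov_def by auto

lemma greedy_cover_chosen:
  "greedy_cover U S C cs \<Longrightarrow> set cs \<subseteq> C"
  unfolding greedy_cover_def by (metis Diff_iff in_set_conv_nth subsetI)

locale greedy_cover_run =
  fixes U :: "'c set" and S :: "'b \<Rightarrow> 'c set" and C :: "'b set"
    and cs :: "'b list" and Opt :: "'b set"
  assumes greedy: "greedy_cover U S C cs"
    and finite_U: "finite U"
    and finite_Opt: "finite Opt"
    and Opt_candidates: "Opt \<subseteq> C"
    and Opt_covers: "U \<subseteq> (\<Union>x\<in>Opt. S x)"
begin

abbreviation unc :: "nat \<Rightarrow> 'c set" where
  "unc \<equiv> uncov U S cs"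

definition gain :: "nat \<Rightarrow> nat" where
  "gain k = card (S (cs ! k) \<inter> unc k)"

lemma unc_subset: "unc k \<subseteq> U"
  unfolding uncov_def by blast

lemma finite_unc: "finite (unc k)"
  using unc_subset finite_U by (rule finite_subset)

lemma unc_Suc: "k < length cs \<Longrightarrow> unc (Suc k) = unc k - S (cs ! k)"
  unfolding uncov_def by (auto simp: take_Suc_conv_app_nth)

text \<open>The greedy choice covers at least as many new elements as any member of Opt
  (members already chosen cover nothing new).\<close>
lemma gain_dominates:
  assumes k: "k < length cs" and x: "x \<in> Opt"
  shows "card (S x \<inter> unc k) \<le> gain k"
proof (cases "x \<in> set (take k cs)")
  case True
  then have "S x \<inter> unc k = {}"
    unfolding uncov_def by blast
  then show ?thesis by simp
next
  case False
  then show ?thesis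
    using greedy k x Opt_candidates unfolding greedy_cover_def gain_def by blast
qed

lemma gain_pos:
  assumes k: "k < length cs"
  shows "0 < gain k"
proof -
  obtain e where e: "e \<in> unc k"
    using greedy k unfolding greedy_cover_def by blast
  then obtain x where x: "x \<in> Opt" "e \<in> S x"
    using Opt_covers unc_subset by blast
  then have "0 < card (S x \<inter> unc k)"
    using e finite_unc by (auto simp: card_gt_0_iff)
  then show ?thesis
    using gain_dominates[OF k x(1)] by linarith
qed

lemma chosen_meets_U:
  assumes "c \<in> set cs"
  shows "S c \<inter> U \<noteq> {}"
proof -
  obtain k where k: "k < length cs" "c = cs ! k"
    using assms by (metis in_set_conv_nth)
  then have "S c \<inter> unc k \<noteq> {}"
    using gain_pos[OF k(1)] unfolding gain_def by auto
  then show ?thesis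
    using unc_subset by blast
qed

text \<open>Charging: distributing the unit cost of step k over the newly covered elements,
  each at price 1 / gain k, and grouping them by a member of Opt containing them.\<close>
lemma unit_cost_charged:
  assumes k: "k < length cs"
  shows "1 \<le> (\<Sum>x\<in>Opt. real (card (S x \<inter> (unc k - unc (Suc k)))) / real (gain k))"
proof -
  let ?D = "unc k - unc (Suc k)"
  have D: "?D = S (cs ! k) \<inter> unc k"
    using unc_Suc[OF k] by blast
  have "?D \<subseteq> (\<Union>x\<in>Opt. S x \<inter> ?D)"
    using Opt_covers unc_subset by blast
  then have "card ?D \<le> card (\<Union>x\<in>Opt. S x \<inter> ?D)"
    using finite_Opt finite_unc by (intro card_mono) auto
  also have "\<dots> \<le> (\<Sum>x\<in>Opt. card (S x \<inter> ?D))"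
    using finite_Opt by (rule card_UN_le)
  finally have "real (gain k) \<le> (\<Sum>x\<in>Opt. real (card (S x \<inter> ?D)))"
    unfolding gain_def D by (metis of_nat_le_iff of_nat_sum)
  then show ?thesis
    using gain_pos[OF k] by (simp add: sum_divide_distrib[symmetric])
qed

lemma charge_le_harm_decrease:
  assumes k: "k < length cs" and x: "x \<in> Opt"
  shows "real (card (S x \<inter> (unc k - unc (Suc k)))) / real (gain k)
           \<le> harm (card (S x \<inter> unc k)) - harm (card (S x \<inter> unc (Suc k)))"
proof -
  define a where "a = card (S x \<inter> unc k)"
  define b where "b = card (S x \<inter> unc (Suc k))"
  have sub: "S x \<inter> unc (Suc k) \<subseteq> S x \<inter> unc k"
    using unc_Suc[OF k] by blast
  then have ba: "b \<le> a"
    unfolding a_def b_def using finite_unc by (intro card_mono) auto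
  have "S x \<inter> (unc k - unc (Suc k)) = (S x \<inter> unc k) - (S x \<inter> unc (Suc k))"
    by blast
  then have new: "card (S x \<inter> (unc k - unc (Suc k))) = a - b"
    unfolding a_def b_def using sub finite_unc by (simp add: card_Diff_subset)
  show ?thesis
  proof (cases "a = 0")
    case True
    then show ?thesis using ba new a_def b_def by simp
  next
    case False
    have "real (a - b) / real (gain k) \<le> real (a - b) / real a"
      using False gain_dominates[OF k x] unfolding a_def by (intro divide_left_mono) auto
    also have "\<dots> \<le> harm a - harm b"
      using ba by (rule harm_diff_lower)
    finally show ?thesis
      unfolding new a_def b_def .
  qed
qed

theorem greedy_length_bound:
  assumes d: "\<And>x. x \<in> Opt \<Longrightarrow> card (S x \<inter> U) \<le> d"
  shows "real (length cs) \<le> harm d * real (card Opt)"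
proof -
  let ?L = "length cs"
  let ?s = "\<lambda>x k. card (S x \<inter> unc k)"
  let ?charge = "\<lambda>k x. real (card (S x \<inter> (unc k - unc (Suc k)))) / real (gain k)"
  have "real ?L = (\<Sum>k<?L. 1)"
    by simp
  also have "\<dots> \<le> (\<Sum>k<?L. \<Sum>x\<in>Opt. ?charge k x)"
    using unit_cost_charged by (intro sum_mono) auto
  also have "\<dots> = (\<Sum>x\<in>Opt. \<Sum>k<?L. ?charge k x)"
    by (rule sum.swap)
  also have "\<dots> \<le> (\<Sum>x\<in>Opt. \<Sum>k<?L. harm (?s x k) - harm (?s x (Suc k)))"
    using charge_le_harm_decrease by (intro sum_mono) auto
  also have "\<dots> = (\<Sum>x\<in>Opt. harm (?s x 0) - harm (?s x ?L))"
    by (intro sum.cong refl) (rule sum_lessThan_telescope')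
  also have "\<dots> \<le> (\<Sum>x\<in>Opt. harm d)"
  proof (intro sum_mono)
    fix x assume "x \<in> Opt"
    then have "harm (?s x 0) \<le> (harm d :: real)"
      using d by (intro harm_mono) (simp add: uncov_def)
    moreover have "0 \<le> (harm (?s x ?L) :: real)"
      by (rule harm_nonneg)
    ultimately show "harm (?s x 0) - harm (?s x ?L) \<le> (harm d :: real)"
      by linarith
  qed
  also have "\<dots> = harm d * real (card Opt)"
    by simp
  finally show ?thesis .
qed

end


section \<open>Trees\<close>

lemma tree_extend:
  assumes T: "is_tree Adj N F" and x: "x \<in> N" and y: "y \<notin> N" and a: "Adj x y"
  shows "is_tree Adj (insert y N) (insert {x, y} F)"
proof -
  have fN: "finite N" and ne: "N \<noteq> {}"
    and Fs: "F \<subseteq> {{x, y} | x y. x \<in> N \<and> y \<in> N \<and> Adj x y}"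
    and con: "\<forall>a\<in>N. \<forall>b\<in>N. (\<lambda>a b. {a, b} \<in> F)\<^sup>*\<^sup>* a b"
    and cF: "card F = card N - 1"
    using T unfolding is_tree_def by auto
  have "F \<subseteq> (\<lambda>(a, b). {a, b}) ` (N \<times> N)"
    using Fs by auto
  then have fF: "finite F"
    using fN by (meson finite_SigmaI finite_imageI finite_subset)
  have new: "{x, y} \<notin> F"
    using Fs y by (auto simp: doubleton_eq_iff)
  let ?R = "\<lambda>a b. {a, b} \<in> insert {x, y} F"
  have old: "(\<lambda>a b. {a, b} \<in> F)\<^sup>*\<^sup>* a b \<Longrightarrow> ?R\<^sup>*\<^sup>* a b" for a b
    by (rule rtranclp_mono[THEN predicate2D, rotated]) auto
  have to_x: "?R\<^sup>*\<^sup>* a x" and from_x: "?R\<^sup>*\<^sup>* x a" if "a \<in> insert y N" for a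
    using that con x old by (auto simp: insert_commute intro: r_into_rtranclp)
  have conn: "\<forall>a\<in>insert y N. \<forall>b\<in>insert y N. ?R\<^sup>*\<^sup>* a b"
    using to_x from_x by (blast intro: rtranclp_trans)
  have sub: "insert {x, y} F \<subseteq> {{a, b} | a b. a \<in> insert y N \<and> b \<in> insert y N \<and> Adj a b}"
    using Fs x a by blast
  have "card (insert {x, y} F) = card (insert y N) - 1"
    using new fF fN y cF ne by (simp add: card_gt_0_iff Suc_diff_Suc)
  then show ?thesis
    unfolding is_tree_def using fN sub conn by simp
qed

lemma walk_leaves_set:
  assumes "r\<^sup>*\<^sup>* a b" "a \<in> A" "b \<notin> A"
  shows "\<exists>p q. r p q \<and> p \<in> A \<and> q \<notin> A"
  using assms by (induction rule: rtranclp.induct) auto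

lemma spanning_tree_extension:
  assumes "finite W" "is_tree Adj N F" "N \<subseteq> W"
    and "\<forall>y\<in>W. \<exists>x\<in>N. (\<lambda>a b. Adj a b \<and> a \<in> W \<and> b \<in> W)\<^sup>*\<^sup>* x y"
  shows "\<exists>F'. is_tree Adj W F'"
  using assms
proof (induction "card (W - N)" arbitrary: N F rule: less_induct)
  case less
  show ?case
  proof (cases "N = W")
    case True
    then show ?thesis using less by blast
  next
    case False
    then obtain y where y: "y \<in> W" "y \<notin> N"
      using less by blast
    then obtain x where x: "x \<in> N" "(\<lambda>a b. Adj a b \<and> a \<in> W \<and> b \<in> W)\<^sup>*\<^sup>* x y"
      using less by blast
    then obtain p q where pq: "Adj p q" "p \<in> N" "q \<notin> N" "q \<in> W"
      using walk_leaves_set[OF x(2) x(1) y(2)] by blast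
    have "is_tree Adj (insert q N) (insert {p, q} F)"
      using tree_extend[OF less(3) pq(2) pq(3) pq(1)] .
    moreover have "card (W - insert q N) < card (W - N)"
      using pq less(2) by (metis Diff_iff card_Diff1_less finite_Diff Diff_insert)
    ultimately show ?thesis
      using less(1)[OF _ less(2)] less(4,5) pq by blast
  qed
qed

lemma walk_within_mono:
  assumes "(\<lambda>a b. R a b \<and> a \<in> A \<and> b \<in> A)\<^sup>*\<^sup>* x y" "A \<subseteq> B"
  shows "(\<lambda>a b. R a b \<and> a \<in> B \<and> b \<in> B)\<^sup>*\<^sup>* x y"
  using assms(1) by (rule rtranclp_mono[THEN predicate2D, rotated]) (use assms(2) in auto)

lemma reflcl_step_walk:
  assumes "R\<^sup>=\<^sup>= p q" "p \<in> A" "q \<in> A"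
  shows "(\<lambda>a b. R a b \<and> a \<in> A \<and> b \<in> A)\<^sup>*\<^sup>* p q"
  using assms by auto

lemma is_tree_adj_mono:
  assumes T: "is_tree R N F" and RR': "\<And>x y. x \<in> N \<Longrightarrow> y \<in> N \<Longrightarrow> R x y \<Longrightarrow> R' x y"
  shows "is_tree R' N F"
proof -
  have "{{x, y} | x y. x \<in> N \<and> y \<in> N \<and> R x y} \<subseteq> {{x, y} | x y. x \<in> N \<and> y \<in> N \<and> R' x y}"
    using RR' by blast
  then show ?thesis
    using T unfolding is_tree_def by (meson order_trans)
qed

lemma tree_attach:
  fixes P :: "'v \<Rightarrow> 'v set"
  assumes T: "is_tree Adj N F" and C: "finite C"
    and P: "\<And>c. c \<in> C \<Longrightarrow> finite (P c) \<and> card (P c) \<le> k"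
    and reach: "\<And>c y. c \<in> C \<Longrightarrow> y \<in> P c \<Longrightarrow>
       \<exists>x\<in>N. (\<lambda>a b. Adj a b \<and> a \<in> N \<union> P c \<and> b \<in> N \<union> P c)\<^sup>*\<^sup>* x y"
  shows "(\<exists>F'. is_tree Adj (N \<union> (\<Union>c\<in>C. P c)) F') \<and>
         card (N \<union> (\<Union>c\<in>C. P c)) \<le> card N + k * card C"
proof
  let ?W = "N \<union> (\<Union>c\<in>C. P c)"
  have fN: "finite N"
    using T unfolding is_tree_def by blast
  have "\<forall>y\<in>?W. \<exists>x\<in>N. (\<lambda>a b. Adj a b \<and> a \<in> ?W \<and> b \<in> ?W)\<^sup>*\<^sup>* x y"
  proof
    fix y assume "y \<in> ?W"
    then consider "y \<in> N" | c where "c \<in> C" "y \<in> P c"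
      by blast
    then show "\<exists>x\<in>N. (\<lambda>a b. Adj a b \<and> a \<in> ?W \<and> b \<in> ?W)\<^sup>*\<^sup>* x y"
    proof cases
      case 1
      then show ?thesis by blast
    next
      case 2
      from reach[OF 2] obtain x
        where x: "x \<in> N" "(\<lambda>a b. Adj a b \<and> a \<in> N \<union> P c \<and> b \<in> N \<union> P c)\<^sup>*\<^sup>* x y" ..
      have "N \<union> P c \<subseteq> ?W"
        using 2 by blast
      from walk_within_mono[OF x(2) this] x(1) show ?thesis ..

    qed
  qed
  moreover have "finite ?W"
    using fN C P by auto
  ultimately show "\<exists>F'. is_tree Adj ?W F'"
    using spanning_tree_extension[OF _ T] by blast
  have "card ?W \<le> card N + card (\<Union>c\<in>C. P c)"
    by (rule card_Un_le)
  also have "card (\<Union>c\<in>C. P c) \<le> (\<Sum>c\<in>C. card (P c))"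
    using C by (rule card_UN_le)
  also have "\<dots> \<le> (\<Sum>c\<in>C. k)"
    using P by (intro sum_mono) simp
  finally show "card ?W \<le> card N + k * card C"
    by (simp add: mult.commute)
qed


section \<open>The extended graph\<close>

definition sat_adj :: "'a set \<Rightarrow> ('a \<Rightarrow> 'a \<Rightarrow> bool) \<Rightarrow> ('a \<Rightarrow> nat set) \<Rightarrow> 'a xv \<Rightarrow> 'a xv \<Rightarrow> bool" where
  "sat_adj V E \<Gamma> x y \<longleftrightarrow> ext_edge V E \<Gamma> x y \<and> x \<in> sat_nodes V E \<Gamma> \<and> y \<in> sat_nodes V E \<Gamma>"

lemma ext_edge_sym: "ext_edge V E \<Gamma> x y \<Longrightarrow> ext_edge V E \<Gamma> y x"
proof -
  assume xy: "ext_edge V E \<Gamma> x y"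
  have "{y, x} = {x, y}" by blast
  then show ?thesis using xy unfolding ext_edge_def by metis
qed

lemma sat_adj_sym: "sat_adj V E \<Gamma> x y \<Longrightarrow> sat_adj V E \<Gamma> y x"
  unfolding sat_adj_def using ext_edge_sym by blast

lemma sat_nodes_Sat: "Sat w j \<in> sat_nodes V E \<Gamma> \<longleftrightarrow> w \<in> V \<and> j \<in> sat_idx V E \<Gamma> w"
  unfolding sat_nodes_def Psi_def by auto

lemma sat_nodes_shape: "c \<in> sat_nodes V E \<Gamma> \<Longrightarrow> \<exists>u i. c = Sat u i"
  unfolding sat_nodes_def Psi_def by auto

lemma Psi_Sat: "Sat w j \<in> Psi V E \<Gamma> u \<longleftrightarrow> w = u \<and> j \<in> sat_idx V E \<Gamma> u"
  unfolding Psi_def by auto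

lemma Psi_clique:
  assumes "m \<in> V" "a \<in> Psi V E \<Gamma> m" "b \<in> Psi V E \<Gamma> m"
  shows "(sat_adj V E \<Gamma>)\<^sup>=\<^sup>= a b"
proof -
  have "a \<in> sat_nodes V E \<Gamma>" "b \<in> sat_nodes V E \<Gamma>"
    using assms unfolding sat_nodes_def by blast+
  moreover have "a \<noteq> b \<Longrightarrow> ext_edge V E \<Gamma> a b"
    unfolding ext_edge_def using assms by (intro conjI disjI1 bexI[of _ m]) auto
  ultimately show ?thesis
    unfolding sat_adj_def by auto
qed

lemma sat_sat_edge:
  assumes "simple_graph V E" "E u v" "i \<in> \<Gamma> v" "k \<in> \<Gamma> u"
  shows "ext_edge V E \<Gamma> (Sat u i) (Sat v k)"
  using assms unfolding ext_edge_def simple_graph_def by blast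

lemma nucleus_neighbour_cases:
  assumes sg: "simple_graph V E" and adj: "ext_edge V E \<Gamma> (Nuc m) (Sat w j)"
  shows "(w = m \<and> m \<in> V) \<or> (E w m \<and> j \<in> \<Gamma> m)"
proof -
  from adj consider
      u where "u \<in> V" "Nuc m \<in> insert (Nuc u) (Psi V E \<Gamma> u)" "Sat w j \<in> insert (Nuc u) (Psi V E \<Gamma> u)"
    | u v i j' where "E u v" "i \<in> \<Gamma> v" "j' \<in> \<Gamma> u"
        "{Nuc m, Sat w j} = {Sat u i, Sat v j'} \<or> {Nuc m, Sat w j} = {Sat u i, Nuc v} \<or>
         {Nuc m, Sat w j} = {Nuc u, Sat v j'}"
    unfolding ext_edge_def by blast
  then show ?thesis
  proof cases
    case 1
    then show ?thesis by (auto simp: Psi_def)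
  next
    case (2 u v i j')
    have "E v u"
      using sg \<open>E u v\<close> unfolding simple_graph_def by blast
    with 2 show ?thesis
      by (auto simp: doubleton_eq_iff)
  qed
qed

lemma near_satellite_of_nucleus:
  assumes sg: "simple_graph V E" and \<Gamma>: "\<And>u. u \<in> V \<Longrightarrow> \<Gamma> u \<noteq> {}"
    and c: "c \<in> sat_nodes V E \<Gamma>" and cm: "ext_edge V E \<Gamma> (Nuc m) c"
  shows "m \<in> V \<and> (\<exists>a \<in> Psi V E \<Gamma> m. (sat_adj V E \<Gamma>)\<^sup>=\<^sup>= a c)"
proof -
  obtain u i where cu: "c = Sat u i"
    using sat_nodes_shape[OF c] by blast
  have uV: "u \<in> V" and iu: "i \<in> sat_idx V E \<Gamma> u"
    using c unfolding cu sat_nodes_Sat by simp_all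
  from nucleus_neighbour_cases[OF sg cm[unfolded cu]]
  show ?thesis
  proof
    assume "u = m \<and> m \<in> V"
    then have "c \<in> Psi V E \<Gamma> m" "m \<in> V"
      using iu unfolding cu Psi_Sat by blast+
    then show ?thesis
      by blast
  next
    assume um: "E u m \<and> i \<in> \<Gamma> m"
    have mu: "E m u" and mV: "m \<in> V"
      using sg um unfolding simple_graph_def by blast+
    obtain k where k: "k \<in> \<Gamma> u"
      using \<Gamma>[OF uV] by blast
    have "k \<in> sat_idx V E \<Gamma> m"
      using mu uV k unfolding sat_idx_def nbG_def by blast
    then have a: "Sat m k \<in> Psi V E \<Gamma> m"
      unfolding Psi_Sat by blast
    then have "Sat m k \<in> sat_nodes V E \<Gamma>"
      using mV unfolding sat_nodes_def by blast
    moreover have "ext_edge V E \<Gamma> (Sat m k) c"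
      unfolding cu using sat_sat_edge[OF sg mu, of k \<Gamma> i] k um by blast
    ultimately have "sat_adj V E \<Gamma> (Sat m k) c"
      unfolding sat_adj_def using c by blast
    then show ?thesis
      using a mV by blast
  qed
qed

text \<open>Two satellites adjacent to a common nuclear node are joined by a satellite walk
  x, b, a, c with at most two inner nodes (through the clique of satellites of m).\<close>
lemma common_nucleus_walk:
  assumes sg: "simple_graph V E" and \<Gamma>: "\<And>u. u \<in> V \<Longrightarrow> \<Gamma> u \<noteq> {}"
    and c: "c \<in> sat_nodes V E \<Gamma>" and x: "x \<in> sat_nodes V E \<Gamma>"
    and cm: "ext_edge V E \<Gamma> (Nuc m) c" and xm: "ext_edge V E \<Gamma> (Nuc m) x"
  shows "\<exists>a b. a \<in> sat_nodes V E \<Gamma> \<and> b \<in> sat_nodes V E \<Gamma> \<and>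
    (sat_adj V E \<Gamma>)\<^sup>=\<^sup>= x b \<and> (sat_adj V E \<Gamma>)\<^sup>=\<^sup>= b a \<and> (sat_adj V E \<Gamma>)\<^sup>=\<^sup>= a c"
proof -
  obtain a where a: "a \<in> Psi V E \<Gamma> m" "(sat_adj V E \<Gamma>)\<^sup>=\<^sup>= a c" and mV: "m \<in> V"
    using near_satellite_of_nucleus[OF sg \<Gamma> c cm] by blast
  obtain b where b: "b \<in> Psi V E \<Gamma> m" "(sat_adj V E \<Gamma>)\<^sup>=\<^sup>= b x"
    using near_satellite_of_nucleus[OF sg \<Gamma> x xm] by blast
  have "(sat_adj V E \<Gamma>)\<^sup>=\<^sup>= x b"
    using b(2) sat_adj_sym by blast
  moreover have "(sat_adj V E \<Gamma>)\<^sup>=\<^sup>= b a"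
    using Psi_clique[OF mV b(1) a(1)] .
  moreover have "a \<in> sat_nodes V E \<Gamma>" "b \<in> sat_nodes V E \<Gamma>"
    using a(1) b(1) mV unfolding sat_nodes_def by blast+
  ultimately show ?thesis
    using a(2) by blast
qed

text \<open>A satellite node is adjacent to at most Delta + 1 nuclear nodes: its own nucleus
  and the neighbours of it.\<close>
lemma nuclear_neighbours_card:
  assumes sg: "simple_graph V E" and x: "x \<in> sat_nodes V E \<Gamma>"
  shows "card (nbX V E \<Gamma> x \<inter> Nuc ` M) \<le> max_degree V E + 1"
proof -
  obtain w j where xw: "x = Sat w j"
    using sat_nodes_shape[OF x] by blast
  have wV: "w \<in> V"
    using x unfolding xw sat_nodes_Sat by simp
  have fV: "finite V"
    using sg unfolding simple_graph_def by blast
  have fn: "finite (nbG V E w)"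
    using fV unfolding nbG_def by simp
  have "nbX V E \<Gamma> x \<inter> Nuc ` M \<subseteq> Nuc ` insert w (nbG V E w)"
  proof
    fix e assume e: "e \<in> nbX V E \<Gamma> x \<inter> Nuc ` M"
    then obtain m where em: "e = Nuc m"
      by blast
    have "ext_edge V E \<Gamma> (Nuc m) (Sat w j)"
      using e em xw ext_edge_sym unfolding nbX_def by blast
    then have "m \<in> insert w (nbG V E w)"
      using nucleus_neighbour_cases[OF sg] sg unfolding nbG_def simple_graph_def by blast
    then show "e \<in> Nuc ` insert w (nbG V E w)"
      using em by blast
  qed
  then have "card (nbX V E \<Gamma> x \<inter> Nuc ` M) \<le> card (Nuc ` insert w (nbG V E w))"
    using fn by (simp add: card_mono)
  also have "\<dots> \<le> card (insert w (nbG V E w))"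
    by (rule card_image_le) (simp add: fn)
  also have "\<dots> \<le> card (nbG V E w) + 1"
    by (simp add: card_insert_if fn)
  also have "card (nbG V E w) \<le> max_degree V E"
    unfolding max_degree_def using fV wV by (auto intro: Max_ge)
  finally show ?thesis
    by simp
qed


section \<open>Satellite bridges and the output of Algorithm 1\<close>

lemma sat_tree_iff:
  "sat_tree V E \<Gamma> N F \<longleftrightarrow> N \<subseteq> sat_nodes V E \<Gamma> \<and> is_tree (sat_adj V E \<Gamma>) N F"
  unfolding sat_tree_def sat_adj_def ..

lemma bridge_sat_tree:
  assumes "satellite_bridge V E \<Gamma> M N F"
  shows "sat_tree V E \<Gamma> N F"
proof -
  have N: "N \<subseteq> sat_nodes V E \<Gamma>" and T: "is_tree (ext_edge V E \<Gamma>) N F"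
    using assms unfolding satellite_bridge_def by blast+
  have "is_tree (sat_adj V E \<Gamma>) N F"
    using T by (rule is_tree_adj_mono) (use N in \<open>auto simp: sat_adj_def\<close>)
  then show ?thesis
    unfolding sat_tree_iff using N by blast
qed

lemma bridge_covers:
  assumes "satellite_bridge V E \<Gamma> M N F"
  shows "Nuc ` M \<subseteq> (\<Union>x\<in>N. nbX V E \<Gamma> x)"
  using assms ext_edge_sym unfolding satellite_bridge_def nbX_def by blast

text \<open>Part one: the output of Algorithm 1 is a satellite bridge, since it contains the
  greedy cover C.\<close>
lemma algorithm_output_is_bridge:
  assumes gr: "greedy_run V E \<Gamma> M cs" and st: "steiner_approx V E \<Gamma> \<rho> (set cs) N F"
  shows "satellite_bridge V E \<Gamma> M N F"
proof -
  have cover: "Nuc ` M \<subseteq> (\<Union>c\<in>set cs. nbX V E \<Gamma> c)"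
    using gr greedy_cover_covers unfolding greedy_run_iff_greedy_cover by blast
  have C: "set cs \<subseteq> N" and N: "N \<subseteq> sat_nodes V E \<Gamma>" and T: "is_tree (sat_adj V E \<Gamma>) N F"
    using st unfolding steiner_approx_def sat_tree_iff by blast+
  have "is_tree (ext_edge V E \<Gamma>) N F"
    using T by (rule is_tree_adj_mono) (simp add: sat_adj_def)
  moreover have "\<exists>x\<in>N. ext_edge V E \<Gamma> (Nuc m) x" if "m \<in> M" for m
    using that cover C ext_edge_sym unfolding nbX_def by blast
  ultimately show ?thesis
    unfolding satellite_bridge_def using N by blast
qed

lemma greedy_run_cover_run:
  assumes sg: "simple_graph V E" and MV: "M \<subseteq> V"
    and gr: "greedy_run V E \<Gamma> M cs" and B: "satellite_bridge V E \<Gamma> M Nopt Fopt"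
  shows "greedy_cover_run (Nuc ` M) (nbX V E \<Gamma>) (sat_nodes V E \<Gamma>) cs Nopt"
proof
  show "greedy_cover (Nuc ` M) (nbX V E \<Gamma>) (sat_nodes V E \<Gamma>) cs"
    using gr unfolding greedy_run_iff_greedy_cover .
  show "finite (Nuc ` M)"
    using sg MV unfolding simple_graph_def by (meson finite_imageI finite_subset)
  show "finite Nopt" "Nopt \<subseteq> sat_nodes V E \<Gamma>"
    using B unfolding satellite_bridge_def is_tree_def by blast+
  show "Nuc ` M \<subseteq> (\<Union>x\<in>Nopt. nbX V E \<Gamma> x)"
    using B by (rule bridge_covers)
qed

lemma greedy_run_length:
  assumes sg: "simple_graph V E" and MV: "M \<subseteq> V"
    and gr: "greedy_run V E \<Gamma> M cs" and B: "satellite_bridge V E \<Gamma> M Nopt Fopt"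
  shows "real (length cs) \<le> harm (max_degree V E + 1) * real (card Nopt)"
proof -
  interpret greedy_cover_run "Nuc ` M" "nbX V E \<Gamma>" "sat_nodes V E \<Gamma>" cs Nopt
    using greedy_run_cover_run[OF sg MV gr B] .
  show ?thesis
  proof (rule greedy_length_bound)
    fix x assume "x \<in> Nopt"
    then show "card (nbX V E \<Gamma> x \<inter> Nuc ` M) \<le> max_degree V E + 1"
      using Opt_candidates by (intro nuclear_neighbours_card[OF sg]) blast
  qed
qed

lemma connecting_tree:
  assumes sg: "simple_graph V E" and \<Gamma>: "\<And>u. u \<in> V \<Longrightarrow> \<Gamma> u \<noteq> {}" and MV: "M \<subseteq> V"
    and gr: "greedy_run V E \<Gamma> M cs" and B: "satellite_bridge V E \<Gamma> M Nopt Fopt"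
  shows "\<exists>W F'. sat_tree V E \<Gamma> W F' \<and> set cs \<subseteq> W \<and> card W \<le> card Nopt + 3 * length cs"
proof -
  interpret greedy_cover_run "Nuc ` M" "nbX V E \<Gamma>" "sat_nodes V E \<Gamma>" cs Nopt
    using greedy_run_cover_run[OF sg MV gr B] .
  let ?R = "sat_adj V E \<Gamma>"
  have chosen: "set cs \<subseteq> sat_nodes V E \<Gamma>"
    using greedy by (rule greedy_cover_chosen)
  have walk: "\<exists>x a b. x \<in> Nopt \<and> a \<in> sat_nodes V E \<Gamma> \<and> b \<in> sat_nodes V E \<Gamma> \<and>
      ?R\<^sup>=\<^sup>= x b \<and> ?R\<^sup>=\<^sup>= b a \<and> ?R\<^sup>=\<^sup>= a c"
    if c: "c \<in> set cs" for c
  proof -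
    obtain m where "Nuc m \<in> nbX V E \<Gamma> c" "m \<in> M"
      using chosen_meets_U[OF c] by blast
    then have cm: "ext_edge V E \<Gamma> (Nuc m) c"
      unfolding nbX_def using ext_edge_sym by blast
    obtain x where x: "x \<in> Nopt" "ext_edge V E \<Gamma> (Nuc m) x"
      using B \<open>m \<in> M\<close> unfolding satellite_bridge_def by blast
    have "c \<in> sat_nodes V E \<Gamma>" "x \<in> sat_nodes V E \<Gamma>"
      using c chosen x(1) Opt_candidates by blast+
    then show ?thesis
      using common_nucleus_walk[OF sg \<Gamma> _ _ cm x(2)] x(1) by blast
  qed
  then obtain X A B where XAB: "\<And>c. c \<in> set cs \<Longrightarrow>
      X c \<in> Nopt \<and> A c \<in> sat_nodes V E \<Gamma> \<and> B c \<in> sat_nodes V E \<Gamma> \<and>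
      ?R\<^sup>=\<^sup>= (X c) (B c) \<and> ?R\<^sup>=\<^sup>= (B c) (A c) \<and> ?R\<^sup>=\<^sup>= (A c) c"
    by metis
  define P where "P c = {c, A c, B c}" for c
  define W where "W = Nopt \<union> (\<Union>c\<in>set cs. P c)"
  have tree: "(\<exists>F'. is_tree ?R W F') \<and> card W \<le> card Nopt + 3 * card (set cs)"
    unfolding W_def
  proof (rule tree_attach)
    show "is_tree ?R Nopt Fopt"
      using bridge_sat_tree[OF B] unfolding sat_tree_iff by blast
    show "finite (P c) \<and> card (P c) \<le> 3" for c
      unfolding P_def by (simp add: card_insert_if)
    fix c y assume c: "c \<in> set cs" and y: "y \<in> P c"
    let ?walk = "(\<lambda>a b. ?R a b \<and> a \<in> Nopt \<union> P c \<and> b \<in> Nopt \<union> P c)\<^sup>*\<^sup>*"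
    have XNP: "X c \<in> Nopt \<union> P c" and P: "c \<in> P c" "A c \<in> P c" "B c \<in> P c"
      using XAB[OF c] unfolding P_def by auto
    have "?walk (X c) (B c)" "?walk (B c) (A c)" "?walk (A c) c"
      using XAB[OF c] XNP P by (auto intro: reflcl_step_walk)
    then have "?walk (X c) y"
      using y unfolding P_def by (auto intro: rtranclp_trans)
    then show "\<exists>x\<in>Nopt. ?walk x y"
      using XAB[OF c] by blast
  qed simp
  have "P c \<subseteq> sat_nodes V E \<Gamma>" if "c \<in> set cs" for c
    using XAB[OF that] chosen that unfolding P_def by blast
  then have "W \<subseteq> sat_nodes V E \<Gamma>"
    using Opt_candidates unfolding W_def by blast
  moreover obtain F' where "is_tree ?R W F'"
    using tree by blast
  moreover have "set cs \<subseteq> W"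
    unfolding W_def P_def by blast
  moreover have "card W \<le> card Nopt + 3 * length cs"
    using tree card_length[of cs] by linarith
  ultimately show ?thesis
    unfolding sat_tree_iff by blast
qed

lemma steiner_node_bound:
  assumes st: "steiner_approx V E \<Gamma> \<rho> C N F" and T: "sat_tree V E \<Gamma> W F'"
    and CW: "C \<subseteq> W" and \<rho>: "\<rho> \<ge> 1"
  shows "real (card N) \<le> \<rho> * real (card W)"
proof -
  have edges: "real (card F) \<le> \<rho> * real (card F')"
    using st T CW unfolding steiner_approx_def by blast
  have "card F = card N - 1" "N \<noteq> {}" "finite N" "card F' = card W - 1" "W \<noteq> {}" "finite W"
    using st T unfolding steiner_approx_def sat_tree_def is_tree_def by blast+
  then have N: "real (card N) = real (card F) + 1" and W: "real (card W) = real (card F') + 1"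
    by (simp_all add: card_gt_0_iff Suc_leI of_nat_diff)
  have "real (card N) \<le> \<rho> * real (card F') + \<rho>"
    using N edges \<rho> by linarith
  also have "\<dots> = \<rho> * real (card W)"
    unfolding W by (simp add: distrib_left)
  finally show ?thesis .
qed


theorem theorem2:
  fixes V :: "'a set" and E :: "'a \<Rightarrow> 'a \<Rightarrow> bool" and K :: nat and \<Gamma> :: "'a \<Rightarrow> nat set"
    and M :: "'a set" and \<rho> :: real and cs :: "'a xv list"
    and N :: "'a xv set" and NF :: "'a xv set set" and Nopt :: "'a xv set" and Fopt :: "'a xv set set"
  assumes "simple_graph V E" and "connected_graph V E" and "card V \<ge> 2"
    and "K > 0" and "\<And>u. u \<in> V \<Longrightarrow> \<Gamma> u \<noteq> {} \<and> \<Gamma> u \<subseteq> {1..K}"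
    and "M \<subseteq> V"
    and "\<rho> \<ge> 1"
    and "greedy_run V E \<Gamma> M cs"
    and "steiner_approx V E \<Gamma> \<rho> (set cs) N NF"
    and "min_satellite_bridge V E \<Gamma> M Nopt Fopt"
  shows "satellite_bridge V E \<Gamma> M N NF \<and>
    real (card N) \<le> (3 * \<rho> * harm (max_degree V E + 1) + \<rho>) * real (card Nopt)"
proof -
  note sg = assms(1) and MV = assms(6) and \<rho> = assms(7) and gr = assms(8) and st = assms(9)
  have \<Gamma>: "\<And>u. u \<in> V \<Longrightarrow> \<Gamma> u \<noteq> {}"
    using assms(5) by blast
  have opt: "satellite_bridge V E \<Gamma> M Nopt Fopt"
    using assms(10) unfolding min_satellite_bridge_def by blast
  define H :: real where "H = harm (max_degree V E + 1)"
  obtain W F' where W: "sat_tree V E \<Gamma> W F'" "set cs \<subseteq> W" "card W \<le> card Nopt + 3 * length cs"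
    using connecting_tree[OF sg \<Gamma> MV gr opt] by blast
  have greedy: "real (length cs) \<le> H * real (card Nopt)"
    unfolding H_def using greedy_run_length[OF sg MV gr opt] .
  have "real (card N) \<le> \<rho> * real (card W)"
    using steiner_node_bound[OF st W(1,2) \<rho>] .
  also have "\<dots> \<le> \<rho> * (real (card Nopt) + 3 * (H * real (card Nopt)))"
    using W(3) greedy \<rho> by (intro mult_left_mono) linarith+
  also have "\<dots> = (3 * \<rho> * H + \<rho>) * real (card Nopt)"
    by (simp add: algebra_simps)
  finally show ?thesis
    using algorithm_output_is_bridge[OF gr st] unfolding H_def by blast
qed

end
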